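(* Let $\mathds{k}$ be an algebraically closed field, $A$ a finite abelian group, $\omega$ a normalized 3-cocycle on $A$ with values in $\mathds{k}^{\times}$, $B$ a finite abelian group, $f:B\to A$ a homomorphism with kernel $K$, and $\phi:B\times B\to\mathds{k}^\times$ a 2-cochain with $d\phi=f^*\omega^{-1}$. Let $Bil(\phi)(b,k)=\phi(b,k)/\phi(k,b)$ for $b\in B,k\in K$ (a bilinear map $B\times K\to\mathds{k}^\times$), $K^{\bot}:=\{b\in B: Bil(\phi)(b,k)=1\ \forall k\in K\}$ and $(K\cap K^{\bot})^{\bot}:=\{b\in B: Bil(\phi)(b,k)=1\ \forall k\in K\cap K^{\bot}\}$. Then $(K\cap K^{\bot})^{\bot} = K + K^{\bot}$.
   Context: For a 2-cochain $\kappa$, $(d\kappa)(a,b,c)=\kappa(b,c)\kappa(a+b,c)^{-1}\kappa(a,b+c)\kappa(a,b)^{-1}$; $(f^*\omega^{-1})(b,c,d)=\omega(f(b),f(c),f(d))^{-1}$. *)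

theory Defs
  imports "HOL-Computational_Algebra.Polynomial"
begin

definition normalized_3cocycle :: "('a::ab_group_add \<Rightarrow> 'a \<Rightarrow> 'a \<Rightarrow> 'k::field) \<Rightarrow> bool" where
  "normalized_3cocycle \<omega> \<longleftrightarrow>
     (\<forall>a b c. \<omega> a b c \<noteq> 0) \<and>
     (\<forall>a b. \<omega> 0 a b = 1 \<and> \<omega> a 0 b = 1 \<and> \<omega> a b 0 = 1) \<and>
     (\<forall>a b c d. \<omega> b c d * inverse (\<omega> (a + b) c d) * \<omega> a (b + c) d
                 * inverse (\<omega> a b (c + d)) * \<omega> a b c = 1)"

definition cobound2 :: "('b::ab_group_add \<Rightarrow> 'b \<Rightarrow> 'k::field) \<Rightarrow> 'b \<Rightarrow> 'b \<Rightarrow> 'b \<Rightarrow> 'k" where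
  "cobound2 \<kappa> a b c = \<kappa> b c * inverse (\<kappa> (a + b) c) * \<kappa> a (b + c) * inverse (\<kappa> a b)"

definition group_hom :: "('b::ab_group_add \<Rightarrow> 'a::ab_group_add) \<Rightarrow> bool" where
  "group_hom f \<longleftrightarrow> (\<forall>x y. f (x + y) = f x + f y)"

definition Bil :: "('b \<Rightarrow> 'b \<Rightarrow> 'k::field) \<Rightarrow> 'b \<Rightarrow> 'b \<Rightarrow> 'k" where
  "Bil \<phi> b k = \<phi> b k / \<phi> k b"

definition perp :: "('b \<Rightarrow> 'b \<Rightarrow> 'k::field) \<Rightarrow> 'b set \<Rightarrow> 'b set" where
  "perp \<phi> S = {b. \<forall>k\<in>S. Bil \<phi> b k = 1}"

end

theory Submission
  imports Defs
begin

text \<open>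
  Since \<open>\<omega>\<close> is normalized and \<open>f\<close> vanishes on \<open>K\<close>, the coboundary \<open>d\<phi>\<close> is trivial on
  every triple meeting \<open>K\<close>. This makes \<open>b \<mapsto> Bil \<phi> b (-)\<close> a homomorphism from \<open>B\<close> to
  the characters of \<open>K\<close> with kernel \<open>K\<^sup>\<bottom>\<close>, and \<open>Bil \<phi>\<close> skew-symmetric on \<open>K \<times> K\<close>.
  Restricted to \<open>K\<close>, its kernel is \<open>H = K \<inter> K\<^sup>\<bottom>\<close>, so \<open>K\<close> yields \<open>|K|/|H|\<close>
  distinct characters trivial on \<open>H\<close>. On the other hand there are at most \<open>|K|/|H|\<close> such
  characters with values in any field: adjoining a generator \<open>g\<close> of relative order \<open>m\<close>,
  a character extends in at most \<open>m\<close> ways, as \<open>\<chi> g\<close> is a root of \<open>z\<^sup>m = \<chi> (m g)\<close>.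
  Hence every character trivial on \<open>H\<close> comes from \<open>K\<close>; for \<open>b \<in> H\<^sup>\<bottom>\<close> this gives
  \<open>k \<in> K\<close> with \<open>b - k \<in> K\<^sup>\<bottom>\<close>.
\<close>

lemma nth_roots_finite_card_le:
  fixes c :: "'k::field"
  assumes "0 < m"
  shows "finite {z. z ^ m = c}" and "card {z. z ^ m = c} \<le> m"
proof -
  define p where "p = monom (1::'k) m + [:-c:]"
  have roots: "{z. z ^ m = c} = {z. poly p z = 0}"
    by (auto simp: p_def poly_monom)
  have deg: "degree p = m"
    using assms unfolding p_def by (subst degree_add_eq_left) (auto simp: degree_monom_eq)
  then have "p \<noteq> 0" using assms by auto
  then show "finite {z. z ^ m = c}" and "card {z. z ^ m = c} \<le> m"
    unfolding roots using poly_roots_finite card_poly_roots_bound deg by metis+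
qed

lemma card_le_card_image_mult:
  assumes "finite A" and "\<And>y. y \<in> f ` A \<Longrightarrow> card {x \<in> A. f x = y} \<le> c"
  shows "card A \<le> card (f ` A) * c"
proof -
  have "card A = card (\<Union>y\<in>f ` A. {x \<in> A. f x = y})"
    by (rule arg_cong[where f = card]) auto
  also have "\<dots> \<le> (\<Sum>y\<in>f ` A. card {x \<in> A. f x = y})"
    using assms(1) by (intro card_UN_le) simp
  also have "\<dots> \<le> card (f ` A) * c"
    using sum_bounded_above[of "f ` A" _ c] assms(2) by auto
  finally show ?thesis .
qed

fun nsmul :: "nat \<Rightarrow> 'a::monoid_add \<Rightarrow> 'a" where
  "nsmul 0 g = 0"
| "nsmul (Suc n) g = g + nsmul n g"

lemma nsmul_add: "nsmul (m + n) g = nsmul m g + nsmul n g"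
  for g :: "'a::comm_monoid_add"
  by (induction m) (simp_all add: add.assoc)

lemma ex_nsmul_eq_0: "\<exists>n>0. nsmul n (g::'a::{ab_group_add,finite}) = 0"
proof -
  have "\<not> inj (\<lambda>n. nsmul n g)"
    using finite_imageD[of "\<lambda>n. nsmul n g" UNIV] by auto
  then obtain i j where "i < j" "nsmul i g = nsmul j g"
    unfolding inj_def by (metis linorder_neqE_nat)
  moreover have "nsmul j g = nsmul (j - i) g + nsmul i g"
    using nsmul_add[of "j - i" i g] \<open>i < j\<close> by simp
  ultimately show ?thesis
    by (intro exI[of _ "j - i"]) simp
qed

definition add_submonoid :: "'a::monoid_add set \<Rightarrow> bool" where
  "add_submonoid S \<longleftrightarrow> 0 \<in> S \<and> (\<forall>x\<in>S. \<forall>y\<in>S. x + y \<in> S)"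

lemma add_submonoid_nsmul: "add_submonoid S \<Longrightarrow> g \<in> S \<Longrightarrow> nsmul n g \<in> S"
  by (induction n) (auto simp: add_submonoid_def)

lemma add_submonoid_uminus:
  fixes S :: "'a::{ab_group_add,finite} set"
  assumes "add_submonoid S" and "x \<in> S"
  shows "- x \<in> S"
proof -
  obtain n where "n > 0" "nsmul n x = 0"
    using ex_nsmul_eq_0 by blast
  then obtain k where "x + nsmul k x = 0"
    by (cases n) auto
  then have "nsmul k x = - x"
    by (simp add: eq_neg_iff_add_eq_0 add.commute)
  then show ?thesis
    using add_submonoid_nsmul[OF assms] by metis
qed

lemma add_submonoid_diff:
  fixes S :: "'a::{ab_group_add,finite} set"
  assumes "add_submonoid S" and "x \<in> S" and "y \<in> S"
  shows "x - y \<in> S"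
  using add_submonoid_uminus[OF assms(1,3)] assms unfolding add_submonoid_def
  by (metis diff_conv_add_uminus)

definition adjoin :: "'a::monoid_add \<Rightarrow> 'a set \<Rightarrow> 'a set" where
  "adjoin g T = {nsmul n g + t | n t. t \<in> T}"

lemma subset_adjoin: "T \<subseteq> adjoin g T"
  unfolding adjoin_def by (force intro: exI[of _ 0])

lemma mem_adjoin: "add_submonoid T \<Longrightarrow> g \<in> adjoin g T"
  unfolding adjoin_def add_submonoid_def by (force intro: exI[of _ 1])

lemma add_submonoid_adjoin:
  fixes T :: "'a::comm_monoid_add set"
  assumes "add_submonoid T"
  shows "add_submonoid (adjoin g T)"
  unfolding add_submonoid_def
proof (intro conjI ballI)
  show "0 \<in> adjoin g T"
    using assms subset_adjoin unfolding add_submonoid_def by blast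
next
  fix x y assume "x \<in> adjoin g T" "y \<in> adjoin g T"
  then obtain n t n' t' where "x = nsmul n g + t" "y = nsmul n' g + t'" "t \<in> T" "t' \<in> T"
    unfolding adjoin_def by auto
  then have "x + y = nsmul (n + n') g + (t + t')" and "t + t' \<in> T"
    using assms unfolding add_submonoid_def by (auto simp: nsmul_add algebra_simps)
  then show "x + y \<in> adjoin g T"
    unfolding adjoin_def by blast
qed

lemma adjoin_subset:
  assumes "add_submonoid S" and "g \<in> S" and "T \<subseteq> S"
  shows "adjoin g T \<subseteq> S"
  using assms add_submonoid_nsmul unfolding adjoin_def add_submonoid_def by blast

lemma card_adjoin_ge:
  fixes T :: "'a::{ab_group_add,finite} set"
  assumes T: "add_submonoid T" and m_min: "\<And>n. 0 < n \<Longrightarrow> n < m \<Longrightarrow> nsmul n g \<notin> T"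
  shows "m * card T \<le> card (adjoin g T)"
proof -
  have no_collision: False
    if "i < j" "j < m" "t \<in> T" "t' \<in> T" "nsmul i g + t = nsmul j g + t'" for i j t t'
  proof -
    have "nsmul (j - i) g + nsmul i g + t' = nsmul i g + t"
      using that(1,5) nsmul_add[of "j - i" i g] by (simp add: add.commute)
    then have "nsmul (j - i) g = t - t'"
      by (simp add: algebra_simps)
    then show False
      using m_min[of "j - i"] add_submonoid_diff[OF T that(3,4)] that(1,2)
      by (simp add: less_imp_diff_less)
  qed
  have same_index: "i = j"
    if "i < m" "j < m" "t \<in> T" "t' \<in> T" "nsmul i g + t = nsmul j g + t'" for i j t t'
    using no_collision[of i j t t'] no_collision[of j i t' t] that by (metis linorder_neqE_nat)
  have "inj_on (\<lambda>(i, t). nsmul i g + t) ({..<m} \<times> T)"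
    by (rule inj_onI) (auto dest: same_index)
  then have "card ({..<m} \<times> T) \<le> card (adjoin g T)"
    by (rule card_inj_on_le) (auto simp: adjoin_def)
  then show ?thesis
    by (simp add: card_cartesian_product)
qed

text \<open>Characters are extended by \<open>0\<close> outside \<open>T\<close>, so that they can be counted as functions.\<close>
definition characters :: "'a::monoid_add set \<Rightarrow> 'a set \<Rightarrow> ('a \<Rightarrow> 'k::field) set" where
  "characters T H = {\<chi>. (\<forall>x\<in>T. \<forall>y\<in>T. \<chi> (x + y) = \<chi> x * \<chi> y) \<and> (\<forall>x\<in>T. \<chi> x \<noteq> 0)
      \<and> (\<forall>x. x \<notin> T \<longrightarrow> \<chi> x = 0) \<and> (\<forall>h\<in>H. \<chi> h = 1)}"

lemma characters_zero:
  assumes "\<chi> \<in> characters T H" and "add_submonoid T"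
  shows "\<chi> 0 = 1"
proof -
  have "\<chi> (0 + 0) = \<chi> 0 * \<chi> 0" and "\<chi> 0 \<noteq> 0"
    using assms unfolding characters_def add_submonoid_def by blast+
  then show ?thesis
    by simp
qed

lemma characters_nsmul:
  assumes "\<chi> \<in> characters T H" and "add_submonoid T" and "g \<in> T"
  shows "\<chi> (nsmul n g) = \<chi> g ^ n"
proof (induction n)
  case 0
  then show ?case using characters_zero[OF assms(1,2)] by simp
next
  case (Suc n)
  have "\<chi> (g + nsmul n g) = \<chi> g * \<chi> (nsmul n g)"
    using assms add_submonoid_nsmul unfolding characters_def by blast
  then show ?case using Suc by simp
qed

lemma characters_adjoin_eqI:
  fixes T :: "'a::comm_monoid_add set"
  assumes \<chi>: "\<chi> \<in> characters (adjoin g T) H" and \<chi>': "\<chi>' \<in> characters (adjoin g T) H"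
    and T: "add_submonoid T" and "\<And>t. t \<in> T \<Longrightarrow> \<chi> t = \<chi>' t" and "\<chi> g = \<chi>' g"
  shows "\<chi> = \<chi>'"
proof
  fix x
  have T': "add_submonoid (adjoin g T)" and g: "g \<in> adjoin g T"
    using add_submonoid_adjoin[OF T] mem_adjoin[OF T] .
  show "\<chi> x = \<chi>' x"
  proof (cases "x \<in> adjoin g T")
    case True
    then obtain n t where x: "x = nsmul n g + t" and "t \<in> T"
      unfolding adjoin_def by auto
    then have "nsmul n g \<in> adjoin g T" and "t \<in> adjoin g T"
      using add_submonoid_nsmul[OF T' g] subset_adjoin by auto
    then have "\<chi> x = \<chi> g ^ n * \<chi> t" and "\<chi>' x = \<chi>' g ^ n * \<chi>' t"
      using characters_nsmul[OF \<chi> T' g] characters_nsmul[OF \<chi>' T' g] \<chi> \<chi>'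
      unfolding x characters_def by auto
    then show ?thesis
      using assms(4,5) \<open>t \<in> T\<close> by simp
  next
    case False
    then show ?thesis using \<chi> \<chi>' unfolding characters_def by auto
  qed
qed

text \<open>A character of the extension is determined by its restriction to \<open>T\<close> and its value
  at \<open>g\<close>, which is an \<open>m\<close>-th root of the value of the restriction at \<open>m g \<in> T\<close>.\<close>
lemma card_characters_adjoin_le:
  fixes H T :: "'a::{ab_group_add,finite} set"
  assumes T: "add_submonoid T" and "H \<subseteq> T" and m: "0 < m" "nsmul m g \<in> T"
    and fin: "finite (characters T H :: ('a \<Rightarrow> 'k::field) set)"
  shows "finite (characters (adjoin g T) H :: ('a \<Rightarrow> 'k) set)"
    and "card (characters (adjoin g T) H :: ('a \<Rightarrow> 'k) set) \<le> m * card (characters T H :: ('a \<Rightarrow> 'k) set)"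
proof -
  define restr where "restr \<chi> = (\<lambda>x. if x \<in> T then \<chi> x else 0)" for \<chi> :: "'a \<Rightarrow> 'k"
  define S where "S = Sigma (characters T H :: ('a \<Rightarrow> 'k) set) (\<lambda>\<psi>. {z. z ^ m = \<psi> (nsmul m g)})"
  define E where "E \<chi> = (restr \<chi>, \<chi> g)" for \<chi> :: "'a \<Rightarrow> 'k"
  have T': "add_submonoid (adjoin g T)" and g: "g \<in> adjoin g T"
    using add_submonoid_adjoin[OF T] mem_adjoin[OF T] .
  have ES: "E ` characters (adjoin g T) H \<subseteq> S"
  proof (rule image_subsetI)
    fix \<chi> :: "'a \<Rightarrow> 'k" assume \<chi>: "\<chi> \<in> characters (adjoin g T) H"
    have "restr \<chi> \<in> characters T H"
      using \<chi> subset_adjoin[of T g] \<open>H \<subseteq> T\<close> T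
      unfolding characters_def restr_def add_submonoid_def by (auto simp: subset_iff)
    moreover have "\<chi> g ^ m = restr \<chi> (nsmul m g)"
      using characters_nsmul[OF \<chi> T' g, of m] m unfolding restr_def by simp
    ultimately show "E \<chi> \<in> S"
      unfolding S_def E_def by simp
  qed
  have injE: "inj_on E (characters (adjoin g T) H)"
  proof (rule inj_onI)
    fix \<chi> \<chi>' assume "\<chi> \<in> characters (adjoin g T) H" "\<chi>' \<in> characters (adjoin g T) H" "E \<chi> = E \<chi>'"
    moreover from \<open>E \<chi> = E \<chi>'\<close> have "\<chi> t = \<chi>' t" if "t \<in> T" for t
      using fun_cong[of "restr \<chi>" "restr \<chi>'" t] that unfolding E_def restr_def by simp
    ultimately show "\<chi> = \<chi>'"
      using characters_adjoin_eqI[OF _ _ T] unfolding E_def by blast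
  qed
  have finS: "finite S"
    unfolding S_def using fin nth_roots_finite_card_le(1)[OF m(1)] by auto
  have "card S = (\<Sum>\<psi>\<in>characters T H. card {z::'k. z ^ m = \<psi> (nsmul m g)})"
    unfolding S_def using fin nth_roots_finite_card_le(1)[OF m(1)] by (intro card_SigmaI) auto
  also have "\<dots> \<le> m * card (characters T H :: ('a \<Rightarrow> 'k) set)"
    by (rule order_trans[OF sum_bounded_above[of _ _ m]])
      (simp_all add: nth_roots_finite_card_le(2)[OF m(1)])
  finally have "card S \<le> m * card (characters T H :: ('a \<Rightarrow> 'k) set)" .
  then show "card (characters (adjoin g T) H :: ('a \<Rightarrow> 'k) set) \<le> m * card (characters T H :: ('a \<Rightarrow> 'k) set)"
    using card_inj_on_le[OF injE ES finS] by linarith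
  show "finite (characters (adjoin g T) H :: ('a \<Rightarrow> 'k) set)"
    using finite_imageD[OF finite_subset[OF ES finS] injE] .
qed

lemma add_submonoid_foldr_adjoin:
  fixes H :: "'a::comm_monoid_add set"
  shows "add_submonoid H \<Longrightarrow> add_submonoid (foldr adjoin L H)"
  by (induction L) (simp_all add: add_submonoid_adjoin)

lemma subset_foldr_adjoin: "H \<subseteq> foldr adjoin L H"
  by (induction L) (use subset_adjoin in \<open>auto\<close>)

lemma card_characters_foldr_adjoin:
  fixes H :: "'a::{ab_group_add,finite} set"
  assumes H: "add_submonoid H"
  shows "finite (characters (foldr adjoin L H) H :: ('a \<Rightarrow> 'k::field) set) \<and>
    card H * card (characters (foldr adjoin L H) H :: ('a \<Rightarrow> 'k) set) \<le> card (foldr adjoin L H)"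
proof (induction L)
  case Nil
  have "characters H H \<subseteq> {(\<lambda>x. if x \<in> H then 1 else 0) :: 'a \<Rightarrow> 'k}"
    unfolding characters_def by auto
  then show ?case
    using finite_subset card_mono[of "{(\<lambda>x. if x \<in> H then 1 else 0) :: 'a \<Rightarrow> 'k}"] by fastforce
next
  case (Cons g L)
  define T where "T = foldr adjoin L H"
  have T: "add_submonoid T" and "H \<subseteq> T"
    unfolding T_def using add_submonoid_foldr_adjoin[OF H] subset_foldr_adjoin by auto
  define m where "m = (LEAST n. 0 < n \<and> nsmul n g \<in> T)"
  have "\<exists>n. 0 < n \<and> nsmul n g \<in> T"
    using ex_nsmul_eq_0[of g] T unfolding add_submonoid_def by auto
  then have m: "0 < m" "nsmul m g \<in> T"
    using LeastI_ex unfolding m_def by (metis (mono_tags, lifting))+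
  have "nsmul n g \<notin> T" if "0 < n" "n < m" for n
    using not_less_Least[of n "\<lambda>n. 0 < n \<and> nsmul n g \<in> T"] that unfolding m_def by auto
  then have index: "m * card T \<le> card (adjoin g T)"
    by (rule card_adjoin_ge[OF T])
  have IH: "finite (characters T H :: ('a \<Rightarrow> 'k) set)"
    "card H * card (characters T H :: ('a \<Rightarrow> 'k) set) \<le> card T"
    using Cons.IH unfolding T_def by blast+
  note extend = card_characters_adjoin_le[OF T \<open>H \<subseteq> T\<close> m IH(1)]
  have "card H * card (characters (adjoin g T) H :: ('a \<Rightarrow> 'k) set)
      \<le> card H * (m * card (characters T H :: ('a \<Rightarrow> 'k) set))"
    using extend(2) by simp
  also have "\<dots> = m * (card H * card (characters T H :: ('a \<Rightarrow> 'k) set))"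
    by (simp add: ac_simps)
  also have "\<dots> \<le> m * card T"
    using IH(2) by simp
  also have "\<dots> \<le> card (adjoin g T)"
    by (rule index)
  finally show ?case
    using extend(1) unfolding T_def by simp
qed

lemma card_characters_le:
  fixes H T :: "'a::{ab_group_add,finite} set"
  assumes H: "add_submonoid H" and T: "add_submonoid T" and "H \<subseteq> T"
  shows "finite (characters T H :: ('a \<Rightarrow> 'k::field) set)"
    and "card H * card (characters T H :: ('a \<Rightarrow> 'k) set) \<le> card T"
proof -
  obtain L where L: "set L = T"
    using finite_list[OF finite] by blast
  have "foldr adjoin L' H \<subseteq> T" if "set L' \<subseteq> T" for L'
    using that \<open>H \<subseteq> T\<close> by (induction L') (simp_all add: adjoin_subset[OF T])
  then have "foldr adjoin L H \<subseteq> T"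
    using L by blast
  moreover have "set L \<subseteq> foldr adjoin L H"
  proof (induction L)
    case (Cons g L)
    then show ?case
      using subset_adjoin[of "foldr adjoin L H" g]
        mem_adjoin[OF add_submonoid_foldr_adjoin[OF H, of L], of g] by auto
  qed simp
  ultimately have "foldr adjoin L H = T"
    using L by blast
  then show "finite (characters T H :: ('a \<Rightarrow> 'k) set)"
    and "card H * card (characters T H :: ('a \<Rightarrow> 'k) set) \<le> card T"
    using card_characters_foldr_adjoin[OF H, of L] by auto
qed

lemma Bil_add_left_if_cobound2_eq_1:
  fixes \<phi> :: "'b::ab_group_add \<Rightarrow> 'b \<Rightarrow> 'k::field"
  assumes nz: "\<And>x y. \<phi> x y \<noteq> 0"
    and "cobound2 \<phi> x y z = 1" and "cobound2 \<phi> z x y = 1" and "cobound2 \<phi> x z y = 1"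
  shows "Bil \<phi> (x + y) z = Bil \<phi> x z * Bil \<phi> y z"
proof -
  have e1: "\<phi> (x + y) z = \<phi> y z * \<phi> x (y + z) / \<phi> x y"
    using assms(2) nz unfolding cobound2_def by (simp add: field_simps)
  have e2: "\<phi> z (x + y) = \<phi> (x + z) y * \<phi> z x / \<phi> x y"
    using assms(3) nz unfolding cobound2_def by (simp add: field_simps add.commute)
  have e3: "\<phi> x (y + z) = \<phi> (x + z) y * \<phi> x z / \<phi> z y"
    using assms(4) nz unfolding cobound2_def by (simp add: field_simps add.commute)
  show ?thesis
    unfolding Bil_def e1 e2 e3 using nz by (simp add: field_simps)
qed

locale kernel_pairing =
  fixes \<phi> :: "'b::{ab_group_add,finite} \<Rightarrow> 'b \<Rightarrow> 'k::field" and K :: "'b set"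
  assumes nonzero: "\<phi> x y \<noteq> 0"
    and add_submonoid_K: "add_submonoid K"
    and cobound2_trivial: "x \<in> K \<or> y \<in> K \<or> z \<in> K \<Longrightarrow> cobound2 \<phi> x y z = 1"
begin

lemma Bil_nonzero: "Bil \<phi> x y \<noteq> 0"
  unfolding Bil_def by (simp add: nonzero)

lemma Bil_swap: "Bil \<phi> x y = inverse (Bil \<phi> y x)"
  unfolding Bil_def by (simp add: nonzero)

lemma Bil_add_left: "k \<in> K \<Longrightarrow> Bil \<phi> (x + y) k = Bil \<phi> x k * Bil \<phi> y k"
  by (rule Bil_add_left_if_cobound2_eq_1) (simp_all add: nonzero cobound2_trivial)

lemma Bil_add_left_K: "x \<in> K \<Longrightarrow> y \<in> K \<Longrightarrow> Bil \<phi> (x + y) z = Bil \<phi> x z * Bil \<phi> y z"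
  by (rule Bil_add_left_if_cobound2_eq_1) (simp_all add: nonzero cobound2_trivial)

lemma Bil_add_right: "x \<in> K \<Longrightarrow> y \<in> K \<Longrightarrow> Bil \<phi> z (x + y) = Bil \<phi> z x * Bil \<phi> z y"
  using Bil_add_left_K[of x y z] Bil_swap[of z "x + y"] Bil_swap[of z x] Bil_swap[of z y]
  by (simp add: inverse_mult_distrib)

lemma Bil_diff_left: "k \<in> K \<Longrightarrow> Bil \<phi> (x - y) k = Bil \<phi> x k / Bil \<phi> y k"
  using Bil_add_left[of k "x - y" y] Bil_nonzero by (simp add: field_simps)

lemma Bil_zero_left: "k \<in> K \<Longrightarrow> Bil \<phi> 0 k = 1"
  using Bil_diff_left[of k 0 0] Bil_nonzero by simp

lemma add_submonoid_radical: "add_submonoid (K \<inter> perp \<phi> K)"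
  using add_submonoid_K Bil_zero_left Bil_add_left unfolding add_submonoid_def perp_def by simp

lemma sum_subset_perp_radical: "{x + y | x y. x \<in> K \<and> y \<in> perp \<phi> K} \<subseteq> perp \<phi> (K \<inter> perp \<phi> K)"
proof (clarify, unfold perp_def, clarify)
  fix x y k assume "x \<in> K" "\<forall>k\<in>K. Bil \<phi> y k = 1" "k \<in> K" "\<forall>x\<in>K. Bil \<phi> k x = 1"
  then show "Bil \<phi> (x + y) k = 1"
    using Bil_add_left Bil_swap[of x k] by simp
qed

definition Bil_char :: "'b \<Rightarrow> 'b \<Rightarrow> 'k" where
  "Bil_char c = (\<lambda>x. if x \<in> K then Bil \<phi> c x else 0)"

lemma Bil_char_eq_iff: "Bil_char c = Bil_char c' \<longleftrightarrow> c - c' \<in> perp \<phi> K"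
proof -
  have "Bil_char c = Bil_char c' \<longleftrightarrow> (\<forall>k\<in>K. Bil \<phi> c k = Bil \<phi> c' k)"
    unfolding Bil_char_def fun_eq_iff by auto
  also have "\<dots> \<longleftrightarrow> c - c' \<in> perp \<phi> K"
    unfolding perp_def using Bil_diff_left Bil_nonzero by simp
  finally show ?thesis .
qed

lemma Bil_char_in_characters:
  "c \<in> perp \<phi> (K \<inter> perp \<phi> K) \<Longrightarrow> Bil_char c \<in> characters K (K \<inter> perp \<phi> K)"
  using add_submonoid_K Bil_add_right Bil_nonzero
  unfolding characters_def Bil_char_def perp_def add_submonoid_def by auto

lemma card_le_card_Bil_char_image: "card K \<le> card (Bil_char ` K) * card (K \<inter> perp \<phi> K)"
proof (rule card_le_card_image_mult)
  fix \<chi> assume "\<chi> \<in> Bil_char ` K"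
  then obtain k0 where k0: "k0 \<in> K" "\<chi> = Bil_char k0"
    by blast
  have "{k \<in> K. Bil_char k = \<chi>} \<subseteq> (\<lambda>h. h + k0) ` (K \<inter> perp \<phi> K)"
  proof
    fix k assume "k \<in> {k \<in> K. Bil_char k = \<chi>}"
    then have k: "k \<in> K" "Bil_char k = \<chi>"
      by simp_all
    then have "k - k0 \<in> perp \<phi> K"
      using k0 Bil_char_eq_iff by simp
    moreover have "k - k0 \<in> K"
      using add_submonoid_diff[OF add_submonoid_K k(1) k0(1)] .
    ultimately have "k - k0 \<in> K \<inter> perp \<phi> K"
      by blast
    then show "k \<in> (\<lambda>h. h + k0) ` (K \<inter> perp \<phi> K)"
      by (rule rev_image_eqI) simp
  qed
  then have "card {k \<in> K. Bil_char k = \<chi>} \<le> card ((\<lambda>h. h + k0) ` (K \<inter> perp \<phi> K))"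
    by (rule card_mono[OF finite])
  also have "\<dots> \<le> card (K \<inter> perp \<phi> K)"
    by (rule card_image_le) simp
  finally show "card {k \<in> K. Bil_char k = \<chi>} \<le> card (K \<inter> perp \<phi> K)" .
qed simp

lemma K_subset_perp_radical: "K \<subseteq> perp \<phi> (K \<inter> perp \<phi> K)"
proof (unfold perp_def, clarify)
  fix k h assume "k \<in> K" "\<forall>x\<in>K. Bil \<phi> h x = 1"
  then show "Bil \<phi> k h = 1"
    using Bil_swap[of k h] by simp
qed

lemma Bil_char_image: "Bil_char ` K = characters K (K \<inter> perp \<phi> K)"
proof -
  let ?H = "K \<inter> perp \<phi> K"
  have sub: "Bil_char ` K \<subseteq> characters K ?H"
    using Bil_char_in_characters K_subset_perp_radical by blast
  note bound = card_characters_le[OF add_submonoid_radical add_submonoid_K Int_lower1, where 'k = 'k]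
  have "card ?H * card (characters K ?H :: ('b \<Rightarrow> 'k) set) \<le> card ?H * card (Bil_char ` K)"
    using order_trans[OF bound(2) card_le_card_Bil_char_image] by (simp only: mult.commute)
  moreover have "0 < card ?H"
    using add_submonoid_radical unfolding add_submonoid_def by (auto simp: card_gt_0_iff)
  ultimately have "card (characters K ?H :: ('b \<Rightarrow> 'k) set) \<le> card (Bil_char ` K)"
    by simp
  then show ?thesis
    using card_seteq[OF bound(1) sub] by simp
qed

lemma perp_radical_subset_sum: "perp \<phi> (K \<inter> perp \<phi> K) \<subseteq> {x + y | x y. x \<in> K \<and> y \<in> perp \<phi> K}"
proof
  fix b assume "b \<in> perp \<phi> (K \<inter> perp \<phi> K)"
  then obtain k where "k \<in> K" "Bil_char b = Bil_char k"
    using Bil_char_in_characters Bil_char_image by (metis imageE)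
  then have "b = k + (b - k)" "b - k \<in> perp \<phi> K"
    using Bil_char_eq_iff by simp_all
  with \<open>k \<in> K\<close> show "b \<in> {x + y | x y. x \<in> K \<and> y \<in> perp \<phi> K}"
    by blast
qed

theorem perp_radical_eq: "perp \<phi> (K \<inter> perp \<phi> K) = {x + y | x y. x \<in> K \<and> y \<in> perp \<phi> K}"
  using perp_radical_subset_sum sum_subset_perp_radical by (rule antisym)

end

theorem lemma2p1p2:
  fixes \<omega> :: "'a::{ab_group_add, finite} \<Rightarrow> 'a \<Rightarrow> 'a \<Rightarrow> 'k::alg_closed_field"
    and f :: "'b::{ab_group_add, finite} \<Rightarrow> 'a"
    and \<phi> :: "'b \<Rightarrow> 'b \<Rightarrow> 'k"
    and K :: "'b set"
  assumes "normalized_3cocycle \<omega>"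
    and "group_hom f"
    and "K = {b. f b = 0}"
    and "\<forall>x y. \<phi> x y \<noteq> 0"
    and "\<forall>x y z. cobound2 \<phi> x y z = inverse (\<omega> (f x) (f y) (f z))"
  shows "perp \<phi> (K \<inter> perp \<phi> K) = {x + y | x y. x \<in> K \<and> y \<in> perp \<phi> K}"
proof -
  have f_add: "f (x + y) = f x + f y" for x y
    using assms(2) unfolding group_hom_def by blast
  then have "f 0 = 0"
    by (metis add_cancel_right_right add_0)
  then have "add_submonoid K"
    using f_add assms(3) unfolding add_submonoid_def by simp
  moreover have "cobound2 \<phi> x y z = 1" if "x \<in> K \<or> y \<in> K \<or> z \<in> K" for x y z
    using that assms(1,3,5) unfolding normalized_3cocycle_def by auto
  ultimately interpret kernel_pairing \<phi> K
    using assms(4) by unfold_locales simp_all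
  show ?thesis
    by (rule perp_radical_eq)
qed

end
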